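(* There is a finitely generated infinite group $G$ and a Cayley graph $\mathrm{Cay}(G;S)$ of $G$ (with $S$ a finite generating set) which does not have any regular spanning tree.
   Context: $\mathrm{Cay}(G;S)$ has vertex set $G$, with $g$ adjacent to $gs$ for $s\in S\cup S^{-1}$. A regular spanning tree is a subgraph that is a tree containing every vertex, in which all vertices have the same degree. *)

theory Defs
  imports "HOL-Algebra.Algebra"
begin

definition cayley_edges :: "('a, 'b) monoid_scheme \<Rightarrow> 'a set \<Rightarrow> 'a set set" where
  "cayley_edges G S = {{g, h} | g h. g \<in> carrier G \<and> h \<in> carrier G \<and> g \<noteq> h \<and>
      (\<exists>s\<in>S. h = g \<otimes>\<^bsub>G\<^esub> s \<or> h = g \<otimes>\<^bsub>G\<^esub> inv\<^bsub>G\<^esub> s)}"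

definition graph_connected :: "'a set \<Rightarrow> 'a set set \<Rightarrow> bool" where
  "graph_connected V E \<longleftrightarrow>
     (\<forall>u\<in>V. \<forall>v\<in>V. (\<lambda>x y. {x, y} \<in> E \<and> x \<in> V \<and> y \<in> V)\<^sup>*\<^sup>* u v)"

definition graph_acyclic :: "'a set \<Rightarrow> 'a set set \<Rightarrow> bool" where
  "graph_acyclic V E \<longleftrightarrow>
     \<not> (\<exists>xs. length xs \<ge> 3 \<and> distinct xs \<and> set xs \<subseteq> V \<and>
          (\<forall>i < length xs - 1. {xs ! i, xs ! Suc i} \<in> E) \<and> {last xs, hd xs} \<in> E)"

definition graph_degree :: "'a set set \<Rightarrow> 'a \<Rightarrow> nat" where
  "graph_degree E v = card {w. w \<noteq> v \<and> {v, w} \<in> E}"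

definition has_regular_spanning_tree :: "'a set \<Rightarrow> 'a set set \<Rightarrow> bool" where
  "has_regular_spanning_tree V E \<longleftrightarrow>
     (\<exists>T. T \<subseteq> E \<and> graph_connected V T \<and> graph_acyclic V T \<and>
          (\<exists>d. \<forall>v\<in>V. graph_degree T v = d))"

end

theory Submission
  imports Defs "HOL-Library.Countable" "HOL-Library.Sublist"
begin

text \<open>Take the free product \<open>C\<^sub>3 * C\<^sub>2 = \<langle>a, b | a\<^sup>3 = b\<^sup>2 = 1\<rangle>\<close> with generators \<open>a, b\<close>.
  Its Cayley graph is cubic: every vertex \<open>g\<close> lies on the triangle \<open>g, ga, ga\<^sup>2\<close> and on the
  edge \<open>{g, gb}\<close>, which is a bridge. A spanning tree contains every bridge and, being connected,
  at least one triangle edge at each corner; being acyclic, it contains exactly two edges of each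
  triangle. The middle corner of that path then has degree 3 while the other corners have degree 2,
  so no spanning tree is regular.\<close>

lemma graph_connected_crosses_cut:
  assumes "graph_connected V T" "x \<in> V" "y \<in> V" "x \<in> C" "y \<notin> C"
  shows "\<exists>p q. {p, q} \<in> T \<and> p \<in> C \<and> q \<notin> C"
proof -
  have "(\<lambda>p q. {p, q} \<in> T \<and> p \<in> V \<and> q \<in> V)\<^sup>*\<^sup>* x y"
    using assms(1-3) unfolding graph_connected_def by blast
  then show ?thesis
    using assms(4,5) by (induction rule: rtranclp_induct) blast+
qed

lemma graph_acyclic_no_triangle:
  assumes "graph_acyclic V T" "distinct [x, y, z]" "{x, y, z} \<subseteq> V"
    and "{x, y} \<in> T" "{y, z} \<in> T" "{z, x} \<in> T"
  shows False
proof -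
  have "\<forall>i < length [x, y, z] - 1. {[x, y, z] ! i, [x, y, z] ! Suc i} \<in> T"
    using assms(4,5) by (auto simp: less_Suc_eq)
  moreover have "{last [x, y, z], hd [x, y, z]} \<in> T"
    using assms(6) by simp
  moreover have "length [x, y, z] \<ge> 3" "set [x, y, z] \<subseteq> V"
    using assms(3) by simp_all
  ultimately show False
    using assms(1,2) unfolding graph_acyclic_def by blast
qed

text \<open>\<open>t\<close> is a corner of the triangle \<open>t, p, q\<close> whose third edge \<open>{t, u}\<close> is the only edge
  leaving \<open>C\<close>, hence a bridge.\<close>
definition bridged_corner :: "'a set \<Rightarrow> 'a set set \<Rightarrow> 'a \<Rightarrow> 'a \<Rightarrow> 'a \<Rightarrow> 'a \<Rightarrow> 'a set \<Rightarrow> bool" where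
  "bridged_corner V E t p q u C \<longleftrightarrow>
     {t, p, q, u} \<subseteq> V \<and> {t, p, q} \<subseteq> C \<and> u \<notin> C \<and>
     (\<forall>w. {t, w} \<in> E \<longrightarrow> w \<noteq> t \<longrightarrow> w \<in> {p, q, u}) \<and>
     (\<forall>x y. {x, y} \<in> E \<longrightarrow> x \<in> C \<longrightarrow> y \<notin> C \<longrightarrow> {x, y} = {t, u})"

lemma bridged_corner_in_spanning_tree:
  assumes corner: "bridged_corner V E t p q u C" and "p \<noteq> t"
    and T: "T \<subseteq> E" "graph_connected V T"
  shows "{t, u} \<in> T" and "{t, p} \<in> T \<or> {t, q} \<in> T"
proof -
  have V: "{t, p, q, u} \<subseteq> V" and C: "{t, p, q} \<subseteq> C" "u \<notin> C"
    and nbrs: "\<And>w. {t, w} \<in> E \<Longrightarrow> w \<noteq> t \<Longrightarrow> w \<in> {p, q, u}"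
    and bridge: "\<And>x y. {x, y} \<in> E \<Longrightarrow> x \<in> C \<Longrightarrow> y \<notin> C \<Longrightarrow> {x, y} = {t, u}"
    using corner unfolding bridged_corner_def by blast+
  obtain x y where xy: "{x, y} \<in> T" "x \<in> C" "y \<notin> C"
    using graph_connected_crosses_cut[OF T(2), of t u C] V C by auto
  then have "{x, y} = {t, u}" using bridge T(1) by blast
  then show "{t, u} \<in> T" using xy(1) by simp
  \<comment> \<open>Inside the cut \<open>C - {t}\<close> the corner is only reached through \<open>{t, p}\<close> or \<open>{t, q}\<close>.\<close>
  obtain x y where xy: "{x, y} \<in> T" "x \<in> C - {t}" "y \<notin> C - {t}"
    using graph_connected_crosses_cut[OF T(2), of p t "C - {t}"] V C \<open>p \<noteq> t\<close> by auto
  show "{t, p} \<in> T \<or> {t, q} \<in> T"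
  proof (cases "y \<in> C")
    case True
    then have "y = t" using xy(3) by simp
    then have tx: "{t, x} \<in> T" using xy(1) by (simp add: insert_commute)
    then have "x \<in> {p, q, u}" using nbrs T(1) xy(2) by blast
    then show ?thesis using tx xy(2) C(2) by auto
  next
    case False
    then have "{x, y} = {t, u}" using bridge xy T(1) by blast
    then show ?thesis using xy(2) C(2) by (auto simp: doubleton_eq_iff)
  qed
qed

lemma bridged_corner_degree_less:
  assumes x: "bridged_corner V E x y z ux Cx" and z: "bridged_corner V E z x y uz Cz"
    and "distinct [x, y, z]" "T \<subseteq> E"
    and "{x, z} \<in> T" "{y, z} \<in> T" "{x, y} \<notin> T" "{z, uz} \<in> T"
  shows "graph_degree T x < graph_degree T z"
proof -
  have "{w. w \<noteq> x \<and> {x, w} \<in> T} \<subseteq> {z, ux}"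
    using x assms(4,7) unfolding bridged_corner_def by blast
  then have "graph_degree T x \<le> card {z, ux}"
    unfolding graph_degree_def by (simp add: card_mono)
  also have "\<dots> \<le> 2"
    by (simp add: card_insert_le_m1)
  also have "2 < card {x, y, uz}"
  proof -
    have "uz \<noteq> x" "uz \<noteq> y"
      using z unfolding bridged_corner_def by auto
    then show ?thesis using assms(3) by simp
  qed
  also have "{x, y, uz} = {w. w \<noteq> z \<and> {z, w} \<in> T}"
    using z assms(3-6,8) unfolding bridged_corner_def by (auto simp: insert_commute)
  finally show ?thesis
    unfolding graph_degree_def .
qed

lemma bridged_triangle_no_regular_spanning_tree:
  assumes x: "bridged_corner V E x y z ux Cx" and y: "bridged_corner V E y z x uy Cy"
    and z: "bridged_corner V E z x y uz Cz" and "distinct [x, y, z]"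
  shows "\<not> has_regular_spanning_tree V E"
proof
  assume "has_regular_spanning_tree V E"
  then obtain T d where T: "T \<subseteq> E" "graph_connected V T" and "graph_acyclic V T"
    and deg: "\<And>v. v \<in> V \<Longrightarrow> graph_degree T v = d"
    unfolding has_regular_spanning_tree_def by blast
  have V: "{x, y, z} \<subseteq> V"
    using x y z unfolding bridged_corner_def by auto
  note corner_x = bridged_corner_in_spanning_tree[OF x _ T]
  note corner_y = bridged_corner_in_spanning_tree[OF y _ T]
  note corner_z = bridged_corner_in_spanning_tree[OF z _ T]
  have "\<not> ({x, y} \<in> T \<and> {y, z} \<in> T \<and> {z, x} \<in> T)"
    using graph_acyclic_no_triangle[OF \<open>graph_acyclic V T\<close> assms(4) V] by blast
  then consider "{x, y} \<notin> T" "{x, z} \<in> T" "{y, z} \<in> T"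
    | "{y, z} \<notin> T" "{y, x} \<in> T" "{z, x} \<in> T"
    | "{z, x} \<notin> T" "{z, y} \<in> T" "{x, y} \<in> T"
    using corner_x(2) corner_y(2) corner_z(2) assms(4) by (auto simp: insert_commute)
  then show False
  proof cases
    case 1
    then have "graph_degree T x < graph_degree T z"
      using bridged_corner_degree_less[OF x z _ T(1)] corner_z(1) assms(4) by (auto simp: insert_commute)
    then show False using deg V by simp
  next
    case 2
    then have "graph_degree T y < graph_degree T x"
      using bridged_corner_degree_less[OF y x _ T(1)] corner_x(1) assms(4) by (auto simp: insert_commute)
    then show False using deg V by simp
  next
    case 3
    then have "graph_degree T z < graph_degree T y"
      using bridged_corner_degree_less[OF z y _ T(1)] corner_y(1) assms(4) by (auto simp: insert_commute)
    then show False using deg V by simp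
  qed
qed

datatype letter = a | a_inv | b

instance letter :: countable
  by countable_datatype

fun letter_inv :: "letter \<Rightarrow> letter" where
  "letter_inv a = a_inv"
| "letter_inv a_inv = a"
| "letter_inv b = b"

fun reduced :: "letter list \<Rightarrow> bool" where
  "reduced (x # y # w) \<longleftrightarrow> (x = b \<longleftrightarrow> y \<noteq> b) \<and> reduced (y # w)"
| "reduced _ \<longleftrightarrow> True"

fun lmul :: "letter \<Rightarrow> letter list \<Rightarrow> letter list" where
  "lmul x [] = [x]"
| "lmul x (y # w) =
     (if y = letter_inv x then w else if x \<noteq> b \<and> y = x then letter_inv x # w else x # y # w)"

lemma letter_neq_b_iff: "x \<noteq> b \<longleftrightarrow> x = a \<or> x = a_inv"
  by (cases x) auto

lemma reduced_ConsD: "reduced (x # w) \<Longrightarrow> reduced w"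
  by (cases w) auto

lemma reduced_lmul: "reduced w \<Longrightarrow> reduced (lmul x w)"
  by (cases w rule: reduced.cases; cases x) (auto simp: letter_neq_b_iff)

lemma reduced_foldr_lmul: "reduced v \<Longrightarrow> reduced (foldr lmul u v)"
  by (induction u) (auto intro: reduced_lmul)

lemma lmul_reduced_Cons: "reduced (x # w) \<Longrightarrow> lmul x w = x # w"
  by (cases w; cases x) auto

lemma foldr_lmul_Nil: "reduced w \<Longrightarrow> foldr lmul w [] = w"
  by (induction w) (simp_all add: reduced_ConsD lmul_reduced_Cons)

lemma lmul_letter_inv: "reduced w \<Longrightarrow> lmul x (lmul (letter_inv x) w) = w"
  by (cases w rule: reduced.cases; cases x) auto

lemma lmul_lmul_a:
  assumes "reduced w" shows "lmul a (lmul a w) = lmul a_inv w" "lmul a_inv (lmul a_inv w) = lmul a w"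
  using assms by (cases w rule: reduced.cases; auto simp: letter_neq_b_iff)+

lemma foldr_lmul_lmul:
  assumes "reduced u" "reduced v"
  shows "foldr lmul (lmul x u) v = lmul x (foldr lmul u v)"
proof (cases u)
  case (Cons y w)
  have "reduced (foldr lmul w v)"
    using assms(2) by (rule reduced_foldr_lmul)
  then show ?thesis
    using Cons lmul_letter_inv[of _ x] lmul_lmul_a by (cases x) auto
qed simp

lemma foldr_lmul_assoc:
  assumes "reduced u" "reduced v"
  shows "foldr lmul (foldr lmul w u) v = foldr lmul w (foldr lmul u v)"
  by (induction w) (simp_all add: assms foldr_lmul_lmul reduced_foldr_lmul)

lemma foldr_lmul_inverse:
  "reduced v \<Longrightarrow> foldr lmul w (foldr lmul (rev (map letter_inv w)) v) = v"
proof (induction w arbitrary: v)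
  case (Cons x w)
  then show ?case
    using reduced_lmul[OF Cons.prems, of "letter_inv x"] by (simp add: lmul_letter_inv)
qed simp

text \<open>An element is stored as its reduced word read right to left, so that right multiplication
  by a letter \<open>x\<close> is \<open>lmul x\<close>, which reduces \<open>x # w\<close>; words are coded as naturals by \<open>to_nat\<close>.\<close>
definition C3_star_C2 :: "nat monoid" where
  "C3_star_C2 =
     \<lparr>carrier = to_nat ` {w. reduced w},
      monoid.mult = (\<lambda>g h. to_nat (foldr lmul (from_nat h) (from_nat g :: letter list))),
      one = to_nat ([] :: letter list)\<rparr>"

lemma carrier_C3_star_C2: "carrier C3_star_C2 = to_nat ` {w :: letter list. reduced w}"
  by (simp add: C3_star_C2_def)

lemma mult_C3_star_C2:
  "to_nat v \<otimes>\<^bsub>C3_star_C2\<^esub> to_nat w = to_nat (foldr lmul w (v :: letter list))"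
  by (simp add: C3_star_C2_def)

lemma one_C3_star_C2: "\<one>\<^bsub>C3_star_C2\<^esub> = to_nat ([] :: letter list)"
  by (simp add: C3_star_C2_def)

lemma reduced_in_carrier_C3_star_C2: "reduced w \<Longrightarrow> to_nat w \<in> carrier C3_star_C2"
  by (simp add: carrier_C3_star_C2)

lemma group_C3_star_C2: "group C3_star_C2"
proof (rule groupI)
  fix g h
  assume "g \<in> carrier C3_star_C2" "h \<in> carrier C3_star_C2"
  then show "g \<otimes>\<^bsub>C3_star_C2\<^esub> h \<in> carrier C3_star_C2"
    by (auto simp: carrier_C3_star_C2 mult_C3_star_C2 reduced_foldr_lmul)
next
  fix g h k
  assume "g \<in> carrier C3_star_C2" "h \<in> carrier C3_star_C2" "k \<in> carrier C3_star_C2"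
  then show "g \<otimes>\<^bsub>C3_star_C2\<^esub> h \<otimes>\<^bsub>C3_star_C2\<^esub> k = g \<otimes>\<^bsub>C3_star_C2\<^esub> (h \<otimes>\<^bsub>C3_star_C2\<^esub> k)"
    by (auto simp: carrier_C3_star_C2 mult_C3_star_C2 reduced_foldr_lmul foldr_lmul_assoc)
next
  fix g
  assume "g \<in> carrier C3_star_C2"
  then obtain w where w: "reduced w" "g = to_nat w"
    by (auto simp: carrier_C3_star_C2)
  then show "\<one>\<^bsub>C3_star_C2\<^esub> \<otimes>\<^bsub>C3_star_C2\<^esub> g = g"
    by (simp add: mult_C3_star_C2 one_C3_star_C2 foldr_lmul_Nil)
  let ?h = "to_nat (foldr lmul (rev (map letter_inv w)) [])"
  have "?h \<in> carrier C3_star_C2" "?h \<otimes>\<^bsub>C3_star_C2\<^esub> g = \<one>\<^bsub>C3_star_C2\<^esub>"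
    using w by (simp_all add: reduced_in_carrier_C3_star_C2 reduced_foldr_lmul mult_C3_star_C2
        one_C3_star_C2 foldr_lmul_inverse)
  then show "\<exists>h \<in> carrier C3_star_C2. h \<otimes>\<^bsub>C3_star_C2\<^esub> g = \<one>\<^bsub>C3_star_C2\<^esub>"
    by blast
qed (simp add: one_C3_star_C2 reduced_in_carrier_C3_star_C2)

definition C3_star_C2_gens :: "nat set" where
  "C3_star_C2_gens = {to_nat [a], to_nat [b]}"

lemma mult_letter_C3_star_C2: "to_nat g \<otimes>\<^bsub>C3_star_C2\<^esub> to_nat [x] = to_nat (lmul x g)"
  by (simp add: mult_C3_star_C2)

lemma inv_letter_C3_star_C2: "inv\<^bsub>C3_star_C2\<^esub> to_nat [x] = to_nat [letter_inv x]"
  by (rule group.inv_equality[OF group_C3_star_C2])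
    (cases x; simp add: mult_letter_C3_star_C2 one_C3_star_C2 reduced_in_carrier_C3_star_C2)+

lemma generate_C3_star_C2: "generate C3_star_C2 C3_star_C2_gens = carrier C3_star_C2"
proof
  have gens: "C3_star_C2_gens \<subseteq> carrier C3_star_C2"
    by (simp add: C3_star_C2_gens_def reduced_in_carrier_C3_star_C2)
  then show "generate C3_star_C2 C3_star_C2_gens \<subseteq> carrier C3_star_C2"
    by (rule group.generate_incl[OF group_C3_star_C2])
  have letter: "to_nat [x] \<in> generate C3_star_C2 C3_star_C2_gens" for x :: letter
  proof -
    have "to_nat [a] \<in> generate C3_star_C2 C3_star_C2_gens" "to_nat [b] \<in> generate C3_star_C2 C3_star_C2_gens"
      by (simp_all add: C3_star_C2_gens_def generate.incl)
    moreover have "to_nat [a_inv] = to_nat [a] \<otimes>\<^bsub>C3_star_C2\<^esub> to_nat [a]"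
      by (simp add: mult_letter_C3_star_C2)
    ultimately show ?thesis
      by (cases x) (simp_all add: generate.eng)
  qed
  have "to_nat w \<in> generate C3_star_C2 C3_star_C2_gens" if "reduced w" for w
    using that
  proof (induction w)
    case Nil
    then show ?case using generate.one[of C3_star_C2] by (simp add: one_C3_star_C2)
  next
    case (Cons x w)
    then have "to_nat (x # w) = to_nat w \<otimes>\<^bsub>C3_star_C2\<^esub> to_nat [x]"
      by (simp add: mult_letter_C3_star_C2 lmul_reduced_Cons)
    then show ?case
      using Cons reduced_ConsD letter by (metis generate.eng)
  qed
  then show "carrier C3_star_C2 \<subseteq> generate C3_star_C2 C3_star_C2_gens"
    by (auto simp: carrier_C3_star_C2)
qed

lemma infinite_carrier_C3_star_C2: "infinite (carrier C3_star_C2)"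
proof -
  let ?w = "\<lambda>n. concat (replicate n [a, b])"
  have "reduced (?w n) \<and> reduced (b # ?w n)" for n
    by (induction n) auto
  then have "range ?w \<subseteq> {w. reduced w}"
    by blast
  moreover have "length (?w n) = 2 * n" for n
    by (induction n) auto
  then have "inj ?w"
    by (intro injI) (metis mult_left_cancel zero_neq_numeral)
  ultimately have "infinite {w :: letter list. reduced w}"
    using range_inj_infinite infinite_super by blast
  then show ?thesis
    unfolding carrier_C3_star_C2 by (meson finite_imageD inj_on_subset inj_to_nat subset_UNIV)
qed

abbreviation C3_star_C2_cayley_edges :: "nat set set" where
  "C3_star_C2_cayley_edges \<equiv> cayley_edges C3_star_C2 C3_star_C2_gens"

lemma C3_star_C2_cayley_edgeE:
  assumes "e \<in> C3_star_C2_cayley_edges"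
  obtains g x where "reduced g" "e = {to_nat g, to_nat (lmul x g)}"
proof -
  obtain g h s where e: "e = {g, h}" "g \<in> carrier C3_star_C2" "s \<in> C3_star_C2_gens"
    "h = g \<otimes>\<^bsub>C3_star_C2\<^esub> s \<or> h = g \<otimes>\<^bsub>C3_star_C2\<^esub> inv\<^bsub>C3_star_C2\<^esub> s"
    using assms unfolding cayley_edges_def by blast
  obtain v where "reduced v" "g = to_nat v"
    using e(2) by (auto simp: carrier_C3_star_C2)
  moreover obtain x where "h = to_nat (lmul x v)"
    using e(3,4) \<open>g = to_nat v\<close> unfolding C3_star_C2_gens_def
    by (auto simp: inv_letter_C3_star_C2 mult_letter_C3_star_C2)
  ultimately show thesis
    using that e(1) by blast
qed

lemma C3_star_C2_cayley_neighbour: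
  assumes "{to_nat t, w} \<in> C3_star_C2_cayley_edges" "reduced t"
  obtains x where "w = to_nat (lmul x t)"
proof -
  obtain g x where g: "reduced g" "{to_nat t, w} = {to_nat g, to_nat (lmul x g)}"
    using assms(1) by (rule C3_star_C2_cayley_edgeE)
  then consider "t = g" "w = to_nat (lmul x g)" | "t = lmul x g" "w = to_nat g"
    by (auto simp: doubleton_eq_iff)
  then show thesis
  proof cases
    case 2
    then have "w = to_nat (lmul (letter_inv x) t)"
      using lmul_letter_inv[OF g(1), of "letter_inv x"] by (cases x) simp_all
    then show thesis by (rule that)
  qed (simp add: that)
qed

lemma suffix_lmul_change:
  assumes "reduced g" "suffix (b # t) g \<noteq> suffix (b # t) (lmul x g)"
  shows "{g, lmul x g} = {t, b # t}"
  using assms by (cases g; cases x) (auto simp: suffix_Cons split: if_splits)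

lemma C3_star_C2_bridged_corner:
  assumes "reduced (b # t)"
  shows "bridged_corner (carrier C3_star_C2) C3_star_C2_cayley_edges
           (to_nat t) (to_nat (lmul a t)) (to_nat (lmul a_inv t)) (to_nat (b # t))
           {r. \<not> suffix (b # t) (from_nat r)}"
  unfolding bridged_corner_def
proof (intro conjI allI impI)
  have t: "reduced t"
    using assms by (rule reduced_ConsD)
  then show "{to_nat t, to_nat (lmul a t), to_nat (lmul a_inv t), to_nat (b # t)} \<subseteq> carrier C3_star_C2"
    using assms by (simp add: reduced_in_carrier_C3_star_C2 reduced_lmul)
  have "\<not> suffix (b # t) (lmul x t)" if "x \<noteq> b" for x
    using assms that by (cases t; cases x) (auto simp: suffix_Cons dest: suffix_length_le)
  then show "{to_nat t, to_nat (lmul a t), to_nat (lmul a_inv t)} \<subseteq> {r. \<not> suffix (b # t) (from_nat r)}"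
    by (auto dest: suffix_length_le)
  show "to_nat (b # t) \<notin> {r. \<not> suffix (b # t) (from_nat r)}"
    by simp
  fix w
  assume "{to_nat t, w} \<in> C3_star_C2_cayley_edges"
  then obtain x where "w = to_nat (lmul x t)"
    using t by (rule C3_star_C2_cayley_neighbour)
  then show "w \<in> {to_nat (lmul a t), to_nat (lmul a_inv t), to_nat (b # t)}"
    using lmul_reduced_Cons[OF assms] by (cases x) auto
next
  fix p q
  assume "{p, q} \<in> C3_star_C2_cayley_edges" "p \<in> {r. \<not> suffix (b # t) (from_nat r)}"
    "q \<notin> {r. \<not> suffix (b # t) (from_nat r)}"
  moreover obtain g x where g: "reduced g" "{p, q} = {to_nat g, to_nat (lmul x g)}"
    using calculation(1) by (rule C3_star_C2_cayley_edgeE)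
  ultimately have "suffix (b # t) g \<noteq> suffix (b # t) (lmul x g)"
    by (auto simp: doubleton_eq_iff)
  with g(1) have "{g, lmul x g} = {t, b # t}"
    by (rule suffix_lmul_change)
  then show "{p, q} = {to_nat t, to_nat (b # t)}"
    using g(2) by (auto simp: doubleton_eq_iff)
qed

theorem proposition5p9:
  shows "\<exists>(G :: nat monoid) S. group G \<and> infinite (carrier G) \<and>
           finite S \<and> S \<subseteq> carrier G \<and> generate G S = carrier G \<and>
           \<not> has_regular_spanning_tree (carrier G) (cayley_edges G S)"
proof (intro exI conjI)
  show "group C3_star_C2"
    by (rule group_C3_star_C2)
  show "infinite (carrier C3_star_C2)"
    by (rule infinite_carrier_C3_star_C2)
  show "finite C3_star_C2_gens" "C3_star_C2_gens \<subseteq> carrier C3_star_C2"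
    by (simp_all add: C3_star_C2_gens_def reduced_in_carrier_C3_star_C2)
  show "generate C3_star_C2 C3_star_C2_gens = carrier C3_star_C2"
    by (rule generate_C3_star_C2)
  show "\<not> has_regular_spanning_tree (carrier C3_star_C2) C3_star_C2_cayley_edges"
    using C3_star_C2_bridged_corner[of "[]"] C3_star_C2_bridged_corner[of "[a]"]
      C3_star_C2_bridged_corner[of "[a_inv]"]
    by (intro bridged_triangle_no_regular_spanning_tree[where x = "to_nat ([] :: letter list)"
          and y = "to_nat [a]" and z = "to_nat [a_inv]"]) simp_all
qed

end
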